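(* Let $a=t_0<t_1<\cdots<t_m=b$ be a partition of $[a,b]$ and let $x_0,x_1,\ldots,x_m\in\mathbb{R}^n$ be fixed. Let $A(t)$ and $B(t)$ be real $n\times n$ matrix functions on $[a,b]$ such that (H1) $B(t)$ has full rank (is nonsingular) for every $t$; (H2) the control system $\dot x(t)=A(t)x(t)+B(t)u(t)$ is completely state controllable; (H3) $t\mapsto A(t)$ and $t\mapsto B(t)$ are $C^1$-smooth. Consider the optimal control problem $(P)$: \[\min_{u(\cdot)}\ J[u(\cdot)]=\int_a^b\langle B(t)u(t),B(t)u(t)\rangle\,dt\] subject to $\dot x(t)=A(t)x(t)+B(t)u(t)$ and $x(t_i)=x_i$ for $i=0,1,\ldots,m$, where the control $u:[a,b]\to\mathbb{R}^n$ is unrestricted and the state $x:[a,b]\to\mathbb{R}^n$ is absolutely continuous. Then the optimal control $u$ is, in each interval $[t_i,t_{i+1}]$, $i=0,1,\ldots,m-1$, a solution of the matrix differential equation $L^*\big(B(t)u\big)=0$, where $L=D-A(t)$ (with $D=d/dt$) and $L^*=-D-A(t)'$ is its adjoint; that is, $\frac{d}{dt}\big(B(t)u(t)\big)+A(t)'B(t)u(t)=0$. The corresponding optimal state trajectory $x$ satisfies $L^*Lx=0$ in each interval $[t_i,t_{i+1}]$, i.e. \[\ddot x(t)+\big(A(t)'-A(t)\big)\dot x(t)-\big(A(t)'A(t)+\dot A(t)\big)x(t)=0 .\]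
   Context: $\langle\cdot,\cdot\rangle$ is the Euclidean inner product on $\mathbb{R}^n$ and a prime ${}'$ denotes the transpose of a vector or matrix. The adjoint $L^*$ of $L=D-A(t)$ is taken with respect to the scalar product $\langle x_1,x_2\rangle=\int_a^b x_1(t)'x_2(t)\,dt$ on vector functions. *)

theory Defs
  imports "HOL-Analysis.Analysis"
begin

text \<open>A pair (u, x) is an admissible control/state pair on [a,b] for the system
  x' = A x + B u: the control u is unrestricted except that the cost integrand
  <B u, B u> is integrable (finite cost) and the system right-hand side is integrable,
  and the state x is absolutely continuous and solves the system in the
  Caratheodory sense, i.e. x(t) = x(a) + int_a^t (A x + B u) for all t in [a,b]
  (equivalently: x absolutely continuous with x' = A x + B u almost everywhere).\<close>
definition admissible_pair ::
  "(real \<Rightarrow> real^'n^'n) \<Rightarrow> (real \<Rightarrow> real^'n^'n) \<Rightarrow> real \<Rightarrow> real \<Rightarrow>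
   (real \<Rightarrow> real^'n) \<Rightarrow> (real \<Rightarrow> real^'n) \<Rightarrow> bool" where
  "admissible_pair A B a b u x \<longleftrightarrow>
     (\<lambda>s. (B s *v u s) \<bullet> (B s *v u s)) integrable_on {a..b} \<and>
     (\<lambda>s. A s *v x s + B s *v u s) integrable_on {a..b} \<and>
     (\<forall>t\<in>{a..b}. x t = x a + integral {a..t} (\<lambda>s. A s *v x s + B s *v u s))"

definition cost :: "(real \<Rightarrow> real^'n^'n) \<Rightarrow> real \<Rightarrow> real \<Rightarrow> (real \<Rightarrow> real^'n) \<Rightarrow> real" where
  "cost B a b u = integral {a..b} (\<lambda>s. (B s *v u s) \<bullet> (B s *v u s))"

definition completely_controllable ::
  "(real \<Rightarrow> real^'n^'n) \<Rightarrow> (real \<Rightarrow> real^'n^'n) \<Rightarrow> real \<Rightarrow> real \<Rightarrow> bool" where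
  "completely_controllable A B a b \<longleftrightarrow>
     (\<forall>\<xi> \<eta>. \<exists>u x. admissible_pair A B a b u x \<and> x a = \<xi> \<and> x b = \<eta>)"

end

theory Submission
  imports Defs
begin

text \<open>On a subinterval \<open>[p, q]\<close> between consecutive nodes, every square-integrable \<open>k\<close> with
  mean zero yields an admissible variation: the state \<open>z = \<integral>\<^sub>p\<^sup>t k\<close> vanishes at all nodes and is
  driven by the control \<open>B\<^sup>-\<^sup>1 (k - A z)\<close>. Since the cost is quadratic, optimality of \<open>u\<close> makes
  the first variation vanish: \<open>\<integral> \<langle>B u, k - A z\<rangle> = 0\<close>. Exchanging the order of integration
  turns \<open>\<integral> \<langle>B u, A z\<rangle>\<close> into \<open>-\<integral> \<langle>F, k\<rangle>\<close> with \<open>F = \<integral>\<^sub>p\<^sup>t A' B u\<close>, so \<open>\<integral> \<langle>B u + F, k\<rangle> = 0\<close> for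
  all such \<open>k\<close>, and by the du Bois-Reymond lemma \<open>B u + F\<close> is a.e. a constant \<open>c\<close>. Hence \<open>B u\<close>
  agrees a.e. with \<open>w = c - F\<close>, which is \<open>C\<^sup>1\<close> with \<open>w' = -A' w\<close>, i.e. \<open>L\<^sup>* w = 0\<close>. Then
  \<open>x' = A x + w\<close> is \<open>C\<^sup>1\<close>, and differentiating once more and eliminating \<open>w\<close> gives \<open>L\<^sup>* L x = 0\<close>.\<close>

section \<open>Fubini on a triangle\<close>

interpretation lebesgue: sigma_finite_measure "lebesgue :: real measure"
proof
  obtain A :: "real set set" where "countable A" "A \<subseteq> sets lborel" "\<Union>A = space lborel"
      "\<forall>a\<in>A. emeasure lborel a \<noteq> \<infinity>"
    using lborel.sigma_finite_countable by blast
  then show "\<exists>A::real set set. countable A \<and> A \<subseteq> sets lebesgue \<and> \<Union>A = space lebesgue \<and>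
      (\<forall>a\<in>A. emeasure lebesgue a \<noteq> \<infinity>)"
    by (intro exI[of _ A]) (auto simp: subset_iff)
qed

interpretation lebesgue_pair: pair_sigma_finite "lebesgue :: real measure" "lebesgue :: real measure" ..

lemma lebesgue_integral_triangle_swap:
  fixes f k :: "real \<Rightarrow> 'a::euclidean_space"
  assumes f: "integrable lebesgue f" and k: "integrable lebesgue k"
  shows "integrable lebesgue (\<lambda>y. (\<integral>x. indicator {..y} x *\<^sub>R f x \<partial>lebesgue) \<bullet> k y)"
    and "integrable lebesgue (\<lambda>x. f x \<bullet> (\<integral>y. indicator {x..} y *\<^sub>R k y \<partial>lebesgue))"
    and "(\<integral>y. (\<integral>x. indicator {..y} x *\<^sub>R f x \<partial>lebesgue) \<bullet> k y \<partial>lebesgue)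
       = (\<integral>x. f x \<bullet> (\<integral>y. indicator {x..} y *\<^sub>R k y \<partial>lebesgue) \<partial>lebesgue)"
proof -
  have [measurable]: "f \<in> borel_measurable lebesgue" "k \<in> borel_measurable lebesgue"
      "(\<lambda>x::real. x) \<in> borel_measurable lebesgue"
    using f k by (auto intro: measurable_completion)
  define H where "H = (\<lambda>(x::real, y::real). of_bool (x \<le> y) * (f x \<bullet> k y))"
  have "integrable (lebesgue \<Otimes>\<^sub>M lebesgue) (\<lambda>(x, y). norm (f x) * norm (k y))"
  proof (rule lebesgue_pair.Fubini_integrable)
    show "integrable lebesgue (\<lambda>x. \<integral>y. norm (case (x, y) of (x, y) \<Rightarrow> norm (f x) * norm (k y)) \<partial>lebesgue)"
      using f by (simp add: integrable_mult_left)
    show "AE x in lebesgue. integrable lebesgue (\<lambda>y. case (x, y) of (x, y) \<Rightarrow> norm (f x) * norm (k y))"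
      using k by (auto intro!: integrable_mult_right)
  qed measurable
  moreover have "H \<in> borel_measurable (lebesgue \<Otimes>\<^sub>M lebesgue)"
    unfolding H_def by measurable
  ultimately have H: "integrable (lebesgue \<Otimes>\<^sub>M lebesgue) H"
    by (rule Bochner_Integration.integrable_bound)
       (auto simp: H_def intro!: AE_I2 order_trans[OF _ Cauchy_Schwarz_ineq2])
  have inner_f: "(\<integral>x. indicator {..y} x *\<^sub>R f x \<partial>lebesgue) \<bullet> k y = (\<integral>x. H (x, y) \<partial>lebesgue)" for y
    using integrable_mult_indicator[OF _ f, of "{..y}"]
    by (subst integral_inner_left[symmetric])
       (auto simp: H_def indicator_def intro!: Bochner_Integration.integral_cong)
  have inner_k: "f x \<bullet> (\<integral>y. indicator {x..} y *\<^sub>R k y \<partial>lebesgue) = (\<integral>y. H (x, y) \<partial>lebesgue)" for x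
    using integrable_mult_indicator[OF _ k, of "{x..}"]
    by (subst integral_inner_right[symmetric])
       (auto simp: H_def indicator_def intro!: Bochner_Integration.integral_cong)
  show "integrable lebesgue (\<lambda>y. (\<integral>x. indicator {..y} x *\<^sub>R f x \<partial>lebesgue) \<bullet> k y)"
    using lebesgue_pair.integrable_snd[of "\<lambda>x y. H (x, y)"] H by (simp add: inner_f)
  show "integrable lebesgue (\<lambda>x. f x \<bullet> (\<integral>y. indicator {x..} y *\<^sub>R k y \<partial>lebesgue))"
    using lebesgue_pair.integrable_fst[of "\<lambda>x y. H (x, y)"] H by (simp add: inner_k)
  show "(\<integral>y. (\<integral>x. indicator {..y} x *\<^sub>R f x \<partial>lebesgue) \<bullet> k y \<partial>lebesgue)
       = (\<integral>x. f x \<bullet> (\<integral>y. indicator {x..} y *\<^sub>R k y \<partial>lebesgue) \<partial>lebesgue)"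
    using lebesgue_pair.Fubini_integral[of "\<lambda>x y. H (x, y)"] H by (simp add: inner_f inner_k)
qed

lemma integral_indefinite_integral_inner_swap:
  fixes f k :: "real \<Rightarrow> 'a::euclidean_space"
  assumes f: "f absolutely_integrable_on {p..q}" and k: "k absolutely_integrable_on {p..q}"
  shows "integral {p..q} (\<lambda>t. integral {p..t} f \<bullet> k t) = integral {p..q} (\<lambda>s. f s \<bullet> integral {s..q} k)"
proof -
  define f0 where "f0 x = indicator {p..q} x *\<^sub>R f x" for x
  define k0 where "k0 x = indicator {p..q} x *\<^sub>R k x" for x
  have f0: "integrable lebesgue f0" and k0: "integrable lebesgue k0"
    using f k unfolding set_integrable_def f0_def k0_def by simp_all
  have "(\<integral>x. indicator {..y} x *\<^sub>R f0 x \<partial>lebesgue) \<bullet> k0 y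
      = (if y \<in> {p..q} then integral {p..y} f \<bullet> k y else 0)" for y
  proof (cases "y \<in> {p..q}")
    case True
    have "(\<lambda>x. indicator {..y} x *\<^sub>R f0 x) = (\<lambda>x. if x \<in> {p..y} then f x else 0)"
      using True by (auto simp: f0_def fun_eq_iff)
    moreover have "integrable lebesgue (\<lambda>x. indicator {..y} x *\<^sub>R f0 x)"
      using integrable_mult_indicator[OF _ f0] by simp
    ultimately have "(\<integral>x. indicator {..y} x *\<^sub>R f0 x \<partial>lebesgue) = integral {p..y} f"
      using integral_lebesgue integral_restrict_UNIV[of "{p..y}" f] by metis
    then show ?thesis
      using True by (simp add: k0_def)
  qed (auto simp: k0_def)
  moreover have "f0 x \<bullet> (\<integral>y. indicator {x..} y *\<^sub>R k0 y \<partial>lebesgue)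
      = (if x \<in> {p..q} then f x \<bullet> integral {x..q} k else 0)" for x
  proof (cases "x \<in> {p..q}")
    case True
    have "(\<lambda>y. indicator {x..} y *\<^sub>R k0 y) = (\<lambda>y. if y \<in> {x..q} then k y else 0)"
      using True by (auto simp: k0_def fun_eq_iff)
    moreover have "integrable lebesgue (\<lambda>y. indicator {x..} y *\<^sub>R k0 y)"
      using integrable_mult_indicator[OF _ k0] by simp
    ultimately have "(\<integral>y. indicator {x..} y *\<^sub>R k0 y \<partial>lebesgue) = integral {x..q} k"
      using integral_lebesgue integral_restrict_UNIV[of "{x..q}" k] by metis
    then show ?thesis
      using True by (simp add: f0_def)
  qed (auto simp: f0_def)
  ultimately show ?thesis
    using lebesgue_integral_triangle_swap[OF f0 k0]
      integral_restrict_UNIV[of "{p..q}" "\<lambda>t. integral {p..t} f \<bullet> k t"]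
      integral_restrict_UNIV[of "{p..q}" "\<lambda>s. f s \<bullet> integral {s..q} k"]
    by (simp add: integral_lebesgue[symmetric])
qed

section \<open>Square-integrable functions and the du Bois-Reymond lemma\<close>

text \<open>Henstock-Kurzweil integrability of \<open>f s \<bullet> f s\<close> alone does not make \<open>f\<close> measurable.\<close>
definition square_integrable :: "real set \<Rightarrow> (real \<Rightarrow> 'a::euclidean_space) \<Rightarrow> bool" where
  "square_integrable S f \<longleftrightarrow> f \<in> borel_measurable (lebesgue_on S) \<and> (\<lambda>s. f s \<bullet> f s) integrable_on S"

lemma square_integrable_inner:
  assumes S: "S \<in> sets lebesgue" and f: "square_integrable S f" and g: "square_integrable S g"
  shows "(\<lambda>s. f s \<bullet> g s) integrable_on S"
proof (rule measurable_bounded_by_integrable_imp_integrable_real[OF _ _ _ S])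
  show "(\<lambda>s. f s \<bullet> g s) \<in> borel_measurable (lebesgue_on S)"
    using f g unfolding square_integrable_def by (intro borel_measurable_inner) auto
  show "(\<lambda>s. f s \<bullet> f s + g s \<bullet> g s) integrable_on S"
    using f g unfolding square_integrable_def by (auto intro!: integrable_add)
  show "\<bar>f s \<bullet> g s\<bar> \<le> f s \<bullet> f s + g s \<bullet> g s" for s
    using Cauchy_Schwarz_ineq2[of "f s" "g s"] sum_squares_bound[of "norm (f s)" "norm (g s)"]
    by (simp add: power2_norm_eq_inner)
qed

lemma square_integrable_add:
  "S \<in> sets lebesgue \<Longrightarrow> square_integrable S f \<Longrightarrow> square_integrable S g \<Longrightarrow>
   square_integrable S (\<lambda>s. f s + g s)"
  using square_integrable_inner[of S f g] square_integrable_inner[of S g f]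
  unfolding square_integrable_def
  by (auto simp: inner_add_left inner_add_right intro!: integrable_add)

lemma square_integrable_scaleR: "square_integrable S f \<Longrightarrow> square_integrable S (\<lambda>s. c *\<^sub>R f s)"
  using integrable_on_cmult_left[of "\<lambda>s. f s \<bullet> f s" S "c * c"]
  unfolding square_integrable_def by (auto simp: mult.assoc)

lemma square_integrable_diff:
  "S \<in> sets lebesgue \<Longrightarrow> square_integrable S f \<Longrightarrow> square_integrable S g \<Longrightarrow>
   square_integrable S (\<lambda>s. f s - g s)"
  using square_integrable_add[of S f "\<lambda>s. (- 1) *\<^sub>R g s"] square_integrable_scaleR[of S g "- 1"]
  by simp

lemma square_integrable_continuous: "continuous_on {p..q} f \<Longrightarrow> square_integrable {p..q} f"
  unfolding square_integrable_def
  by (auto intro!: continuous_imp_measurable_on_sets_lebesgue integrable_continuous_interval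
      continuous_intros)

lemma square_integrable_imp_absolutely_integrable:
  assumes "square_integrable {p..q} f" shows "f absolutely_integrable_on {p..q}"
proof (rule measurable_bounded_by_integrable_imp_absolutely_integrable)
  show "f \<in> borel_measurable (lebesgue_on {p..q})" "(\<lambda>s. 1 + f s \<bullet> f s) integrable_on {p..q}"
    using assms by (auto simp: square_integrable_def intro!: integrable_add)
  show "norm (f s) \<le> 1 + f s \<bullet> f s" for s
  proof -
    have "2 * norm (f s) \<le> f s \<bullet> f s + 1"
      using sum_squares_bound[of "norm (f s)" 1] by (simp add: power2_norm_eq_inner)
    then show ?thesis
      using inner_ge_zero[of "f s"] norm_ge_zero[of "f s"] by linarith
  qed
qed auto

lemma square_integrable_imp_integrable: "square_integrable {p..q} f \<Longrightarrow> f integrable_on {p..q}"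
  using square_integrable_imp_absolutely_integrable absolutely_integrable_on_def by blast

lemma integral_nonneg_eq_0_imp_AE:
  fixes f :: "real \<Rightarrow> real"
  assumes f: "f integrable_on S" and nonneg: "\<And>x. x \<in> S \<Longrightarrow> 0 \<le> f x" and "integral S f = 0"
  shows "AE x in lebesgue. x \<in> S \<longrightarrow> f x = 0"
proof -
  have f_abs: "f absolutely_integrable_on S"
    by (rule nonnegative_absolutely_integrable_1[OF f nonneg])
  then have int: "integrable lebesgue (\<lambda>x. indicator S x *\<^sub>R f x)"
    by (simp add: set_integrable_def)
  have "(\<integral>x. indicator S x *\<^sub>R f x \<partial>lebesgue) = 0"
    using set_lebesgue_integral_eq_integral(2)[OF f_abs] \<open>integral S f = 0\<close>
    by (simp add: set_lebesgue_integral_def)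
  then have "AE x in lebesgue. indicator S x *\<^sub>R f x = 0"
    using integral_nonneg_eq_0_iff_AE[OF int] nonneg by (auto simp: indicator_def)
  then show ?thesis
    by eventually_elim (auto simp: indicator_def split: if_splits)
qed

lemma du_Bois_Reymond:
  fixes g :: "real \<Rightarrow> 'a::euclidean_space"
  assumes "p < q" and g: "square_integrable {p..q} g"
    and orth: "\<And>k. square_integrable {p..q} k \<Longrightarrow> integral {p..q} k = 0 \<Longrightarrow>
                 integral {p..q} (\<lambda>s. g s \<bullet> k s) = 0"
  obtains c where "AE s in lebesgue. s \<in> {p..q} \<longrightarrow> g s = c"
proof -
  define c where "c = (1 / (q - p)) *\<^sub>R integral {p..q} g"
  define k where "k s = g s - c" for s
  have k: "square_integrable {p..q} k"
    unfolding k_def by (rule square_integrable_diff[OF _ g square_integrable_continuous]) auto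
  have k0: "integral {p..q} k = 0"
    unfolding k_def using \<open>p < q\<close>
      integral_diff[OF square_integrable_imp_integrable[OF g] integrable_const_ivl[of c p q]]
    by (simp add: c_def)
  have ck: "((\<lambda>s. c \<bullet> k s) has_integral c \<bullet> integral {p..q} k) {p..q}"
    using has_integral_linear[OF integrable_integral bounded_linear_inner_right]
      square_integrable_imp_integrable[OF k] by (simp add: o_def)
  have "integral {p..q} (\<lambda>s. k s \<bullet> k s) = integral {p..q} (\<lambda>s. g s \<bullet> k s - c \<bullet> k s)"
    by (simp add: k_def inner_diff_left)
  also have "\<dots> = 0"
    using integral_diff[OF square_integrable_inner[OF _ g k] has_integral_integrable[OF ck]]
      orth[OF k k0] integral_unique[OF ck] k0 by simp
  finally have "AE s in lebesgue. s \<in> {p..q} \<longrightarrow> k s \<bullet> k s = 0"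
    using k by (intro integral_nonneg_eq_0_imp_AE) (auto simp: square_integrable_def)
  then have "AE s in lebesgue. s \<in> {p..q} \<longrightarrow> g s = c"
    by eventually_elim (simp add: k_def)
  then show thesis by (rule that)
qed

lemma integral_cong_AE_subset:
  fixes f g :: "real \<Rightarrow> 'a::euclidean_space"
  assumes "AE s in lebesgue. s \<in> S \<longrightarrow> f s = g s" and "T \<subseteq> S"
  shows "integral T f = integral T g"
proof -
  obtain N where "negligible N" "{s. \<not> (s \<in> S \<longrightarrow> f s = g s)} \<subseteq> N"
    using assms(1) unfolding eventually_ae_filter_negligible by blast
  then show ?thesis
    using assms(2) by (intro integral_spike[of N]) auto
qed

lemma integral_restrict_mean_zero:
  fixes k :: "real \<Rightarrow> 'a::euclidean_space"
  assumes "a \<le> p" and "integral {p..q} k = 0"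
  shows "integral {a..t} (\<lambda>s. if s \<in> {p..q} then k s else 0)
       = (if t \<in> {p..q} then integral {p..t} k else 0)"
proof -
  consider "t < p" | "t \<in> {p..q}" | "q < t" by force
  then have "integral ({p..q} \<inter> {a..t}) k = (if t \<in> {p..q} then integral {p..t} k else 0)"
  proof cases
    case 2
    then have "{p..q} \<inter> {a..t} = {p..t}" using assms by auto
    then show ?thesis using 2 by simp
  next
    case 3
    then have "{p..q} \<inter> {a..t} = {p..q}" using assms by auto
    then show ?thesis using 3 assms by simp
  qed auto
  then show ?thesis
    unfolding integral_restrict_Int .
qed

lemma has_vector_derivative_indefinite_integral_plus:
  fixes f g :: "real \<Rightarrow> 'a::banach"
  assumes f: "continuous_on {p..q} f" and g: "\<And>t. t \<in> {p..q} \<Longrightarrow> g t = c + integral {p..t} f"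
    and s: "s \<in> {p..q}"
  shows "(g has_vector_derivative f s) (at s within {p..q})"
proof (rule has_vector_derivative_transform[OF s g])
  show "((\<lambda>t. c + integral {p..t} f) has_vector_derivative f s) (at s within {p..q})"
    using has_vector_derivative_add[OF has_vector_derivative_const integral_has_vector_derivative[OF f s]]
    by simp
qed

lemma bilinear_matrix_vector_mult: "bilinear (\<lambda>(M::real^'n^'m) (v::real^'n). M *v v)"
  unfolding bilinear_def
  by (auto intro!: linearI simp: matrix_vector_mul_linear matrix_vector_mult_add_rdistrib
      scaleR_matrix_vector_assoc)

lemma bounded_bilinear_matrix_vector_mult:
  "bounded_bilinear (\<lambda>(M::real^'n^'m) (v::real^'n). M *v v)"
  using bilinear_matrix_vector_mult by (simp add: bilinear_conv_bounded_bilinear)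

lemma continuous_on_matrix_vector_mult:
  "continuous_on S A \<Longrightarrow> continuous_on S x \<Longrightarrow> continuous_on S (\<lambda>s. (A s :: real^'n^'m) *v x s)"
  using bounded_bilinear.continuous_on[OF bounded_bilinear_matrix_vector_mult] by simp

lemma has_vector_derivative_matrix_vector_mult:
  "(A has_vector_derivative A') (at s within S) \<Longrightarrow> (x has_vector_derivative x') (at s within S) \<Longrightarrow>
   ((\<lambda>s. (A s :: real^'n^'m) *v x s) has_vector_derivative (A s *v x' + A' *v x s)) (at s within S)"
  using bounded_bilinear.has_vector_derivative[OF bounded_bilinear_matrix_vector_mult, of A A' s S x x']
  by simp

lemma continuous_on_transpose:
  "continuous_on S A \<Longrightarrow> continuous_on S (\<lambda>s. transpose (A s :: real^'n^'m))"
  unfolding transpose_def by (intro continuous_on_vec_lambda continuous_on_component)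

lemma absolutely_integrable_continuous_matrix_vector_mult:
  fixes M :: "real \<Rightarrow> real^'n^'m" and g :: "real \<Rightarrow> real^'n"
  assumes M: "continuous_on {p..q} M" and g: "g absolutely_integrable_on {p..q}"
  shows "(\<lambda>s. M s *v g s) absolutely_integrable_on {p..q}"
  using absolutely_integrable_bounded_measurable_product[OF bilinear_matrix_vector_mult _ _ _ g]
    continuous_imp_measurable_on_sets_lebesgue[OF M]
    compact_imp_bounded[OF compact_continuous_image[OF M compact_Icc]]
  by simp

lemma inner_matrix_vector_mult_transpose:
  "((M::real^'n^'m) *v x) \<bullet> y = x \<bullet> (transpose M *v y)"
  by (metis dot_lmul_matrix vector_transpose_matrix transpose_transpose)

lemma matrix_vector_mult_matrix_inv_right:
  "invertible (M::real^'n^'n) \<Longrightarrow> M *v (matrix_inv M *v y) = y"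
  unfolding invertible_def matrix_inv_def
  by (metis (mono_tags, lifting) matrix_vector_mul_assoc matrix_vector_mul_lid someI_ex)

lemma integral_inner_matrix_indefinite_integral:
  fixes A :: "real \<Rightarrow> real^'n^'m" and w :: "real \<Rightarrow> real^'m" and k :: "real \<Rightarrow> real^'n"
  assumes A: "continuous_on {p..q} A" and w: "w absolutely_integrable_on {p..q}"
    and k: "k absolutely_integrable_on {p..q}" and k0: "integral {p..q} k = 0"
  shows "integral {p..q} (\<lambda>s. w s \<bullet> (A s *v integral {p..s} k))
       = - integral {p..q} (\<lambda>s. integral {p..s} (\<lambda>r. transpose (A r) *v w r) \<bullet> k s)"
proof -
  let ?f = "\<lambda>r. transpose (A r) *v w r"
  have "integral {p..q} (\<lambda>s. integral {p..s} ?f \<bullet> k s) = integral {p..q} (\<lambda>s. ?f s \<bullet> integral {s..q} k)"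
    using absolutely_integrable_continuous_matrix_vector_mult[OF continuous_on_transpose[OF A] w] k
    by (rule integral_indefinite_integral_inner_swap)
  also have "\<dots> = integral {p..q} (\<lambda>s. - (w s \<bullet> (A s *v integral {p..s} k)))"
  proof (rule integral_cong)
    fix s assume s: "s \<in> {p..q}"
    have "integral {p..s} k + integral {s..q} k = 0"
      using Henstock_Kurzweil_Integration.integral_combine[of p s q k] s k0 k
      by (auto simp: absolutely_integrable_on_def)
    then have "integral {s..q} k = - integral {p..s} k"
      by (simp add: eq_neg_iff_add_eq_0 add.commute)
    then show "?f s \<bullet> integral {s..q} k = - (w s \<bullet> (A s *v integral {p..s} k))"
      using inner_matrix_vector_mult_transpose[of "A s" "integral {p..s} k" "w s"]
      by (simp add: inner_commute)
  qed
  finally show ?thesis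
    by simp
qed

lemma nonneg_quadratic_imp_linear_coeff_0:
  fixes X Y :: real
  assumes "\<And>e. 0 \<le> 2 * e * X + e\<^sup>2 * Y"
  shows "X = 0"
proof -
  define D where "D = \<bar>Y\<bar> + 1"
  have "D > 0" "Y < 2 * D" by (auto simp: D_def)
  have "0 \<le> D\<^sup>2 * (2 * (- X / D) * X + (- X / D)\<^sup>2 * Y)"
    using assms[of "- X / D"] by simp
  also have "\<dots> = X\<^sup>2 * (Y - 2 * D)"
    using \<open>D > 0\<close> by (simp add: field_simps power2_eq_square)
  finally have "X\<^sup>2 * (Y - 2 * D) = 0"
    using mult_nonneg_nonpos[of "X\<^sup>2" "Y - 2 * D"] \<open>Y < 2 * D\<close> by simp
  then show ?thesis
    using \<open>Y < 2 * D\<close> by simp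
qed

section \<open>Admissible pairs and the first variation\<close>

lemma admissible_pairD:
  assumes "admissible_pair A B a b u x"
  shows "(\<lambda>s. (B s *v u s) \<bullet> (B s *v u s)) integrable_on {a..b}"
    and "(\<lambda>s. A s *v x s + B s *v u s) integrable_on {a..b}"
    and "\<And>t. t \<in> {a..b} \<Longrightarrow> x t = x a + integral {a..t} (\<lambda>s. A s *v x s + B s *v u s)"
  using assms unfolding admissible_pair_def by blast+

lemma admissible_pair_continuous:
  assumes "admissible_pair A B a b u x"
  shows "continuous_on {a..b} x"
proof (rule continuous_on_eq)
  show "continuous_on {a..b} (\<lambda>t. x a + integral {a..t} (\<lambda>s. A s *v x s + B s *v u s))"
    by (intro continuous_intros indefinite_integral_continuous_1 admissible_pairD(2)[OF assms])
qed (rule admissible_pairD(3)[OF assms, symmetric])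

lemma admissible_pair_square_integrable:
  assumes A: "continuous_on {a..b} A" and adm: "admissible_pair A B a b u x"
  shows "square_integrable {a..b} (\<lambda>s. B s *v u s)"
proof -
  have "(\<lambda>s. A s *v x s) integrable_on {a..b}"
    by (intro integrable_continuous_interval continuous_on_matrix_vector_mult A
        admissible_pair_continuous[OF adm])
  from integrable_diff[OF admissible_pairD(2)[OF adm] this]
  have "(\<lambda>s. B s *v u s) integrable_on {a..b}"
    by simp
  then show ?thesis
    using admissible_pairD(1)[OF adm] unfolding square_integrable_def
    by (auto intro: integrable_imp_measurable)
qed

lemma admissible_pair_subinterval:
  assumes adm: "admissible_pair A B a b u x" and "a \<le> p" "p \<le> q" "q \<le> b"
  shows "admissible_pair A B p q u x"
  unfolding admissible_pair_def
proof (intro conjI ballI)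
  let ?f = "\<lambda>s. A s *v x s + B s *v u s"
  have sub: "{p..q} \<subseteq> {a..b}" using assms by auto
  show "(\<lambda>s. (B s *v u s) \<bullet> (B s *v u s)) integrable_on {p..q}" "?f integrable_on {p..q}"
    using integrable_on_subinterval[OF admissible_pairD(1)[OF adm] sub]
      integrable_on_subinterval[OF admissible_pairD(2)[OF adm] sub] by blast+
  fix t assume t: "t \<in> {p..q}"
  then have "{a..t} \<subseteq> {a..b}" using assms by auto
  then have "integral {a..p} ?f + integral {p..t} ?f = integral {a..t} ?f"
    using t assms
    by (intro Henstock_Kurzweil_Integration.integral_combine
        integrable_on_subinterval[OF admissible_pairD(2)[OF adm]]) auto
  moreover have "x p = x a + integral {a..p} ?f" "x t = x a + integral {a..t} ?f"
    using t assms by (auto intro: admissible_pairD(3)[OF adm])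
  ultimately show "x t = x p + integral {p..t} ?f"
    by (simp add: algebra_simps)
qed

lemma admissible_pair_add:
  assumes A: "continuous_on {a..b} A"
    and adm_u: "admissible_pair A B a b u x" and adm_h: "admissible_pair A B a b h z"
  shows "admissible_pair A B a b (\<lambda>s. u s + h s) (\<lambda>s. x s + z s)"
  unfolding admissible_pair_def
proof (intro conjI ballI)
  have "square_integrable {a..b} (\<lambda>s. B s *v u s + B s *v h s)"
    using admissible_pair_square_integrable[OF A adm_u] admissible_pair_square_integrable[OF A adm_h]
    by (intro square_integrable_add) auto
  then show "(\<lambda>s. (B s *v (u s + h s)) \<bullet> (B s *v (u s + h s))) integrable_on {a..b}"
    by (simp add: square_integrable_def matrix_vector_right_distrib)
  have sum: "A s *v (x s + z s) + B s *v (u s + h s)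
      = (A s *v x s + B s *v u s) + (A s *v z s + B s *v h s)"
    for s by (simp add: matrix_vector_right_distrib algebra_simps)
  show "(\<lambda>s. A s *v (x s + z s) + B s *v (u s + h s)) integrable_on {a..b}"
    unfolding sum by (intro integrable_add admissible_pairD(2) adm_u adm_h)
  fix t assume t: "t \<in> {a..b}"
  then have "{a..t} \<subseteq> {a..b}" by auto
  then have "integral {a..t} (\<lambda>s. A s *v (x s + z s) + B s *v (u s + h s))
      = integral {a..t} (\<lambda>s. A s *v x s + B s *v u s) + integral {a..t} (\<lambda>s. A s *v z s + B s *v h s)"
    unfolding sum
    by (intro integral_add integrable_on_subinterval[OF admissible_pairD(2)[OF adm_u]]
        integrable_on_subinterval[OF admissible_pairD(2)[OF adm_h]])
  then show "x t + z t = x a + z a + integral {a..t} (\<lambda>s. A s *v (x s + z s) + B s *v (u s + h s))"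
    using admissible_pairD(3)[OF adm_u t] admissible_pairD(3)[OF adm_h t] by simp
qed

lemma admissible_pair_scaleR:
  assumes adm: "admissible_pair A B a b u x"
  shows "admissible_pair A B a b (\<lambda>s. c *\<^sub>R u s) (\<lambda>s. c *\<^sub>R x s)"
proof -
  have rhs: "A s *v (c *\<^sub>R x s) + B s *v (c *\<^sub>R u s) = c *\<^sub>R (A s *v x s + B s *v u s)" for s
    by (simp add: matrix_vector_mult_scaleR scaleR_add_right)
  have cost: "(B s *v (c *\<^sub>R u s)) \<bullet> (B s *v (c *\<^sub>R u s)) = (c * c) * ((B s *v u s) \<bullet> (B s *v u s))"
    for s by (simp add: matrix_vector_mult_scaleR)
  show ?thesis
    unfolding admissible_pair_def rhs cost
  proof (intro conjI ballI)
    show "(\<lambda>s. (c * c) * ((B s *v u s) \<bullet> (B s *v u s))) integrable_on {a..b}"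
      using integrable_on_cmult_left[OF admissible_pairD(1)[OF adm], of "c * c"] by simp
    show "(\<lambda>s. c *\<^sub>R (A s *v x s + B s *v u s)) integrable_on {a..b}"
      by (rule integrable_cmul[OF admissible_pairD(2)[OF adm]])
    fix t assume "t \<in> {a..b}"
    then have "x t = x a + integral {a..t} (\<lambda>s. A s *v x s + B s *v u s)"
      by (rule admissible_pairD(3)[OF adm])
    then show "c *\<^sub>R x t = c *\<^sub>R x a + integral {a..t} (\<lambda>s. c *\<^sub>R (A s *v x s + B s *v u s))"
      by (simp only: integral_cmul scaleR_add_right[symmetric])
  qed
qed

lemma cost_add:
  assumes A: "continuous_on {a..b} A"
    and adm_u: "admissible_pair A B a b u x" and adm_h: "admissible_pair A B a b h z"
  shows "cost B a b (\<lambda>s. u s + h s)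
       = cost B a b u + 2 * integral {a..b} (\<lambda>s. (B s *v u s) \<bullet> (B s *v h s)) + cost B a b h"
proof -
  let ?uu = "\<lambda>s. (B s *v u s) \<bullet> (B s *v u s)" and ?uh = "\<lambda>s. (B s *v u s) \<bullet> (B s *v h s)"
    and ?hh = "\<lambda>s. (B s *v h s) \<bullet> (B s *v h s)"
  have uu: "?uu integrable_on {a..b}" and hh: "?hh integrable_on {a..b}"
    using admissible_pairD(1) adm_u adm_h by blast+
  have uh: "?uh integrable_on {a..b}"
    using admissible_pair_square_integrable[OF A adm_u] admissible_pair_square_integrable[OF A adm_h]
    by (intro square_integrable_inner) auto
  then have uh2: "(\<lambda>s. 2 * ?uh s) integrable_on {a..b}"
    using integrable_on_cmult_left[of ?uh "{a..b}" 2] by simp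
  have expand: "(B s *v (u s + h s)) \<bullet> (B s *v (u s + h s)) = (?uu s + 2 * ?uh s) + ?hh s" for s
    by (simp add: matrix_vector_right_distrib inner_add_left inner_add_right
        inner_commute[of "B s *v h s" "B s *v u s"])
  have "cost B a b (\<lambda>s. u s + h s) = integral {a..b} (\<lambda>s. (?uu s + 2 * ?uh s) + ?hh s)"
    unfolding cost_def expand ..
  also have "\<dots> = integral {a..b} ?uu + integral {a..b} (\<lambda>s. 2 * ?uh s) + integral {a..b} ?hh"
    by (simp only: integral_add[OF integrable_add[OF uu uh2] hh] integral_add[OF uu uh2])
  finally show ?thesis
    unfolding cost_def integral_mult_right .
qed

text \<open>The bump \<open>z\<close> vanishes outside \<open>(p, q)\<close> because \<open>k\<close> has mean zero.\<close>
lemma admissible_pair_bump: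
  fixes A B :: "real \<Rightarrow> real^'n^'n" and k :: "real \<Rightarrow> real^'n"
  assumes "a \<le> p" "q \<le> b"
    and B: "\<And>s. s \<in> {a..b} \<Longrightarrow> invertible (B s)" and A: "continuous_on {a..b} A"
    and k: "square_integrable {p..q} k" and k0: "integral {p..q} k = 0"
  defines "z \<equiv> \<lambda>t. if t \<in> {p..q} then integral {p..t} k else 0"
  shows "admissible_pair A B a b
           (\<lambda>s. matrix_inv (B s) *v (if s \<in> {p..q} then k s - A s *v z s else 0)) z"
proof -
  let ?d = "\<lambda>s. if s \<in> {p..q} then k s - A s *v z s else 0"
    and ?k = "\<lambda>s. if s \<in> {p..q} then k s else 0"
  have pq_ab: "{p..q} \<inter> {a..b} = {p..q}" using assms by auto
  have Bd: "B s *v (matrix_inv (B s) *v ?d s) = ?d s" if "s \<in> {a..b}" for s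
    by (rule matrix_vector_mult_matrix_inv_right[OF B[OF that]])
  have z: "z t = integral {a..t} ?k" for t
    unfolding z_def integral_restrict_mean_zero[OF \<open>a \<le> p\<close> k0] ..
  have "continuous_on {p..q} (\<lambda>s. A s *v integral {p..s} k)"
    using A assms square_integrable_imp_integrable[OF k]
    by (intro continuous_on_matrix_vector_mult indefinite_integral_continuous_1)
       (auto elim: continuous_on_subset)
  then have "square_integrable {p..q} (\<lambda>s. k s - A s *v integral {p..s} k)"
    by (intro square_integrable_diff k square_integrable_continuous) auto
  then have "(\<lambda>s. if s \<in> {p..q} then
      (k s - A s *v integral {p..s} k) \<bullet> (k s - A s *v integral {p..s} k) else 0) integrable_on {a..b}"
    unfolding integrable_restrict_Int pq_ab square_integrable_def by blast
  then have dd: "(\<lambda>s. ?d s \<bullet> ?d s) integrable_on {a..b}"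
    by (rule integrable_eq) (simp add: z_def)
  have k_ab: "?k integrable_on {a..b}"
    unfolding integrable_restrict_Int pq_ab by (rule square_integrable_imp_integrable[OF k])
  have rhs: "A s *v z s + B s *v (matrix_inv (B s) *v ?d s) = ?k s" if "s \<in> {a..b}" for s
    using Bd[OF that] by (simp add: z_def)
  show ?thesis
    unfolding admissible_pair_def
  proof (intro conjI ballI)
    show "(\<lambda>s. (B s *v (matrix_inv (B s) *v ?d s)) \<bullet> (B s *v (matrix_inv (B s) *v ?d s)))
        integrable_on {a..b}"
      using dd by (rule integrable_eq) (simp only: Bd)
    show "(\<lambda>s. A s *v z s + B s *v (matrix_inv (B s) *v ?d s)) integrable_on {a..b}"
      using k_ab by (rule integrable_eq) (simp only: rhs)
    fix t assume "t \<in> {a..b}"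
    then have "integral {a..t} (\<lambda>s. A s *v z s + B s *v (matrix_inv (B s) *v ?d s))
        = integral {a..t} ?k"
      by (intro integral_cong rhs) auto
    then show "z t = z a + integral {a..t} (\<lambda>s. A s *v z s + B s *v (matrix_inv (B s) *v ?d s))"
      using z[of t] z[of a] by simp
  qed
qed

lemma minimal_cost_first_variation:
  assumes A: "continuous_on {a..b} A" and adm: "admissible_pair A B a b u x"
    and optimal: "\<And>v y. admissible_pair A B a b v y \<Longrightarrow> (\<forall>s\<in>T. y s = x s) \<Longrightarrow>
                cost B a b u \<le> cost B a b v"
    and adm_h: "admissible_pair A B a b h z" and z: "\<And>s. s \<in> T \<Longrightarrow> z s = 0"
  shows "integral {a..b} (\<lambda>s. (B s *v u s) \<bullet> (B s *v h s)) = 0"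
proof (rule nonneg_quadratic_imp_linear_coeff_0)
  fix e :: real
  have adm_eh: "admissible_pair A B a b (\<lambda>s. e *\<^sub>R h s) (\<lambda>s. e *\<^sub>R z s)"
    by (rule admissible_pair_scaleR[OF adm_h])
  have "cost B a b u \<le> cost B a b (\<lambda>s. u s + e *\<^sub>R h s)"
    by (rule optimal[OF admissible_pair_add[OF A adm adm_eh]]) (simp add: z)
  also have "\<dots> = cost B a b u + 2 * integral {a..b} (\<lambda>s. (B s *v u s) \<bullet> (B s *v (e *\<^sub>R h s)))
      + cost B a b (\<lambda>s. e *\<^sub>R h s)"
    by (rule cost_add[OF A adm adm_eh])
  also have "\<dots> = cost B a b u + 2 * e * integral {a..b} (\<lambda>s. (B s *v u s) \<bullet> (B s *v h s))
      + e\<^sup>2 * cost B a b h"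
    by (simp add: cost_def matrix_vector_mult_scaleR power2_eq_square mult.assoc)
  finally show "0 \<le> 2 * e * integral {a..b} (\<lambda>s. (B s *v u s) \<bullet> (B s *v h s)) + e\<^sup>2 * cost B a b h"
    by simp
qed

lemma optimal_control_orthogonal_on_interval:
  fixes A B :: "real \<Rightarrow> real^'n^'n" and u x k :: "real \<Rightarrow> real^'n"
  assumes "a \<le> p" "p \<le> q" "q \<le> b"
    and B: "\<And>s. s \<in> {a..b} \<Longrightarrow> invertible (B s)" and A: "continuous_on {a..b} A"
    and adm: "admissible_pair A B a b u x"
    and optimal: "\<And>v y. admissible_pair A B a b v y \<Longrightarrow> (\<forall>s\<in>T. y s = x s) \<Longrightarrow>
                cost B a b u \<le> cost B a b v"
    and T: "T \<inter> {p<..<q} = {}"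
    and k: "square_integrable {p..q} k" and k0: "integral {p..q} k = 0"
  shows "integral {p..q} (\<lambda>s. (B s *v u s) \<bullet> (k s - A s *v integral {p..s} k)) = 0"
proof -
  define z where "z t = (if t \<in> {p..q} then integral {p..t} k else 0)" for t
  define d where "d s = (if s \<in> {p..q} then k s - A s *v z s else 0)" for s
  have adm_h: "admissible_pair A B a b (\<lambda>s. matrix_inv (B s) *v d s) z"
    unfolding d_def z_def using admissible_pair_bump[OF assms(1,3) B A k k0] by simp
  have z_T: "z s = 0" if "s \<in> T" for s
  proof -
    have "s \<notin> {p<..<q}" using that T by blast
    then consider "s \<notin> {p..q}" | "s = p" | "s = q" by force
    then show ?thesis using k0 by cases (auto simp: z_def)
  qed
  have "integral {a..b} (\<lambda>s. (B s *v u s) \<bullet> (B s *v (matrix_inv (B s) *v d s))) = 0"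
    by (rule minimal_cost_first_variation[OF A adm _ adm_h z_T]) (fact optimal)
  moreover have "integral {a..b} (\<lambda>s. (B s *v u s) \<bullet> (B s *v (matrix_inv (B s) *v d s)))
      = integral {a..b} (\<lambda>s. if s \<in> {p..q} then (B s *v u s) \<bullet> (k s - A s *v integral {p..s} k) else 0)"
    by (intro integral_cong) (simp add: matrix_vector_mult_matrix_inv_right B d_def z_def)
  ultimately show ?thesis
    unfolding integral_restrict_Int using assms by (simp add: max_absorb1 min_absorb2)
qed

section \<open>The Euler-Lagrange equations\<close>

lemma adjoint_equation_of_orthogonality:
  fixes A :: "real \<Rightarrow> real^'n^'n" and w :: "real \<Rightarrow> real^'n"
  assumes "p < q" and A: "continuous_on {p..q} A" and w: "square_integrable {p..q} w"
    and orth: "\<And>k. square_integrable {p..q} k \<Longrightarrow> integral {p..q} k = 0 \<Longrightarrow>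
                 integral {p..q} (\<lambda>s. w s \<bullet> (k s - A s *v integral {p..s} k)) = 0"
  obtains v where "\<And>s. s \<in> {p..q} \<Longrightarrow>
      (v has_vector_derivative - (transpose (A s) *v v s)) (at s within {p..q})"
    and "AE s in lebesgue. s \<in> {p..q} \<longrightarrow> w s = v s"
proof -
  define F where "F t = integral {p..t} (\<lambda>s. transpose (A s) *v w s)" for t
  have w_abs: "w absolutely_integrable_on {p..q}"
    by (rule square_integrable_imp_absolutely_integrable[OF w])
  have F_cont: "continuous_on {p..q} F"
    unfolding F_def
    using absolutely_integrable_continuous_matrix_vector_mult[OF continuous_on_transpose[OF A] w_abs]
    by (intro indefinite_integral_continuous_1) (simp add: absolutely_integrable_on_def)
  then have wF: "square_integrable {p..q} (\<lambda>s. w s + F s)"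
    by (intro square_integrable_add w square_integrable_continuous) auto
  have "integral {p..q} (\<lambda>s. (w s + F s) \<bullet> k s) = 0"
    if k: "square_integrable {p..q} k" and k0: "integral {p..q} k = 0" for k
  proof -
    let ?z = "\<lambda>s. integral {p..s} k"
    have "continuous_on {p..q} (\<lambda>s. A s *v ?z s)"
      using square_integrable_imp_integrable[OF k]
      by (intro continuous_on_matrix_vector_mult A indefinite_integral_continuous_1)
    then have "(\<lambda>s. w s \<bullet> (A s *v ?z s)) integrable_on {p..q}"
      by (intro square_integrable_inner w square_integrable_continuous) auto
    moreover have "(\<lambda>s. w s \<bullet> k s) integrable_on {p..q}" "(\<lambda>s. F s \<bullet> k s) integrable_on {p..q}"
      using square_integrable_inner[OF _ w k]
        square_integrable_inner[OF _ square_integrable_continuous[OF F_cont] k]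
      by auto
    moreover have "integral {p..q} (\<lambda>s. F s \<bullet> k s) = - integral {p..q} (\<lambda>s. w s \<bullet> (A s *v ?z s))"
      unfolding F_def
      using integral_inner_matrix_indefinite_integral[OF A w_abs
          square_integrable_imp_absolutely_integrable[OF k] k0] by simp
    ultimately show ?thesis
      using orth[OF k k0] by (simp add: inner_add_left inner_diff_right integral_add integral_diff)
  qed
  then obtain c where c: "AE s in lebesgue. s \<in> {p..q} \<longrightarrow> w s + F s = c"
    using du_Bois_Reymond[OF \<open>p < q\<close> wF] by blast
  define v where "v s = c - F s" for s
  have AE_v: "AE s in lebesgue. s \<in> {p..q} \<longrightarrow> w s = v s"
    using c by eventually_elim (auto simp: v_def algebra_simps)
  have "continuous_on {p..q} (\<lambda>s. transpose (A s) *v v s)"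
    unfolding v_def
    by (intro continuous_on_matrix_vector_mult continuous_on_transpose A continuous_intros
        F_cont)
  moreover have "AE s in lebesgue. s \<in> {p..q} \<longrightarrow>
      transpose (A s) *v w s = transpose (A s) *v v s"
    using AE_v by eventually_elim simp
  then have "F t = 0 + integral {p..t} (\<lambda>s. transpose (A s) *v v s)" if "t \<in> {p..q}" for t
    unfolding F_def add_0 by (rule integral_cong_AE_subset) (use that in auto)
  ultimately have F_deriv: "(F has_vector_derivative transpose (A s) *v v s) (at s within {p..q})"
    if "s \<in> {p..q}" for s
    using that by (rule has_vector_derivative_indefinite_integral_plus)
  then have "(v has_vector_derivative - (transpose (A s) *v v s)) (at s within {p..q})"
    if "s \<in> {p..q}" for s
    using has_vector_derivative_diff[OF has_vector_derivative_const F_deriv[OF that], of c]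
    by (simp add: v_def[abs_def])
  then show thesis
    using AE_v by (rule that)
qed

lemma second_order_state_equation:
  fixes A dA :: "real \<Rightarrow> real^'n^'n" and u x v :: "real \<Rightarrow> real^'n"
  assumes dA: "\<And>s. s \<in> {p..q} \<Longrightarrow> (A has_vector_derivative dA s) (at s within {p..q})"
    and adm: "admissible_pair A B p q u x"
    and v: "\<And>s. s \<in> {p..q} \<Longrightarrow>
              (v has_vector_derivative - (transpose (A s) *v v s)) (at s within {p..q})"
    and Bu: "AE s in lebesgue. s \<in> {p..q} \<longrightarrow> B s *v u s = v s"
  shows "\<exists>x1 x2. \<forall>s\<in>{p..q}.
           (x has_vector_derivative x1 s) (at s within {p..q}) \<and>
           (x1 has_vector_derivative x2 s) (at s within {p..q}) \<and>
           x2 s + (transpose (A s) - A s) *v x1 s - (transpose (A s) ** A s + dA s) *v x s = 0"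
proof -
  have A: "continuous_on {p..q} A" and v_cont: "continuous_on {p..q} v"
    unfolding continuous_on_eq_continuous_within using dA v has_vector_derivative_continuous by blast+
  define x1 where "x1 s = A s *v x s + v s" for s
  have "continuous_on {p..q} x1"
    unfolding x1_def
    by (intro continuous_intros continuous_on_matrix_vector_mult A v_cont
        admissible_pair_continuous[OF adm])
  moreover have "AE s in lebesgue. s \<in> {p..q} \<longrightarrow> A s *v x s + B s *v u s = x1 s"
    using Bu by eventually_elim (simp add: x1_def)
  then have "x t = x p + integral {p..t} x1" if "t \<in> {p..q}" for t
    using admissible_pairD(3)[OF adm that] integral_cong_AE_subset[where S="{p..q}" and T="{p..t}"] that
    by auto
  ultimately have x_deriv: "(x has_vector_derivative x1 s) (at s within {p..q})" if "s \<in> {p..q}" for s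
    using that by (rule has_vector_derivative_indefinite_integral_plus)
  define x2 where "x2 s = (A s *v x1 s + dA s *v x s) + - (transpose (A s) *v v s)" for s
  have "(x1 has_vector_derivative x2 s) (at s within {p..q})" if "s \<in> {p..q}" for s
  proof -
    have "((\<lambda>s. A s *v x s + v s) has_vector_derivative x2 s) (at s within {p..q})"
      unfolding x2_def
      by (intro has_vector_derivative_add has_vector_derivative_matrix_vector_mult dA v x_deriv that)
    then show ?thesis
      unfolding x1_def[abs_def] .
  qed
  moreover have "x2 s + (transpose (A s) - A s) *v x1 s - (transpose (A s) ** A s + dA s) *v x s = 0"
    for s
  proof -
    have "v s = x1 s - A s *v x s" by (simp add: x1_def)
    then show ?thesis
      unfolding x2_def
      by (simp only: matrix_vector_mult_diff_rdistrib matrix_vector_mult_add_rdistrib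
          matrix_vector_mult_diff_distrib matrix_vector_mul_assoc[symmetric]) (simp add: algebra_simps)
  qed
  ultimately show ?thesis
    using x_deriv by blast
qed

lemma optimal_control_necessary_conditions_on_interval:
  fixes A B dA :: "real \<Rightarrow> real^'n^'n" and u x :: "real \<Rightarrow> real^'n"
  assumes "a \<le> p" "p < q" "q \<le> b"
    and B: "\<And>s. s \<in> {a..b} \<Longrightarrow> invertible (B s)"
    and dA: "\<And>s. s \<in> {a..b} \<Longrightarrow> (A has_vector_derivative dA s) (at s within {a..b})"
    and adm: "admissible_pair A B a b u x"
    and optimal: "\<And>v y. admissible_pair A B a b v y \<Longrightarrow> (\<forall>s\<in>T. y s = x s) \<Longrightarrow>
                    cost B a b u \<le> cost B a b v"
    and T: "T \<inter> {p<..<q} = {}"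
  shows "(\<exists>w. (\<forall>s\<in>{p..q}.
             (w has_vector_derivative (- (transpose (A s) *v w s))) (at s within {p..q})) \<and>
          (AE s in lebesgue. s \<in> {p..q} \<longrightarrow> B s *v u s = w s)) \<and>
     (\<exists>x1 x2. \<forall>s\<in>{p..q}.
          (x has_vector_derivative x1 s) (at s within {p..q}) \<and>
          (x1 has_vector_derivative x2 s) (at s within {p..q}) \<and>
          x2 s + (transpose (A s) - A s) *v x1 s - (transpose (A s) ** A s + dA s) *v x s = 0)"
proof -
  have A: "continuous_on {a..b} A"
    using dA has_vector_derivative_continuous continuous_on_eq_continuous_within by blast
  have A_pq: "continuous_on {p..q} A"
    using A by (rule continuous_on_subset) (use assms in auto)
  have adm_pq: "admissible_pair A B p q u x"
    using assms by (intro admissible_pair_subinterval[OF adm]) auto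
  obtain v where v: "\<And>s. s \<in> {p..q} \<Longrightarrow>
      (v has_vector_derivative - (transpose (A s) *v v s)) (at s within {p..q})"
    and Bu: "AE s in lebesgue. s \<in> {p..q} \<longrightarrow> B s *v u s = v s"
    using \<open>p < q\<close> A_pq admissible_pair_square_integrable[OF A_pq adm_pq]
  proof (rule adjoint_equation_of_orthogonality)
    show "integral {p..q} (\<lambda>s. (B s *v u s) \<bullet> (k s - A s *v integral {p..s} k)) = 0"
      if "square_integrable {p..q} k" "integral {p..q} k = 0" for k
      using assms(1-3) B A adm optimal T that by (intro optimal_control_orthogonal_on_interval) auto
  qed (rule that)
  moreover have "\<exists>x1 x2. \<forall>s\<in>{p..q}.
      (x has_vector_derivative x1 s) (at s within {p..q}) \<and>
      (x1 has_vector_derivative x2 s) (at s within {p..q}) \<and>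
      x2 s + (transpose (A s) - A s) *v x1 s - (transpose (A s) ** A s + dA s) *v x s = 0"
  proof (rule second_order_state_equation[OF _ adm_pq v Bu])
    show "(A has_vector_derivative dA s) (at s within {p..q})" if "s \<in> {p..q}" for s
      by (rule has_vector_derivative_within_subset[OF dA]) (use that assms in auto)
  qed
  ultimately show ?thesis
    by blast
qed

theorem lemma3p1:
  fixes A B dA dB :: "real \<Rightarrow> real^'n^'n"
    and a b :: real and m :: nat and t :: "nat \<Rightarrow> real" and xs :: "nat \<Rightarrow> real^'n"
    and u x :: "real \<Rightarrow> real^'n"
  assumes part: "t 0 = a" "t m = b" "\<And>i. i < m \<Longrightarrow> t i < t (Suc i)"
    and H1: "\<And>s. s \<in> {a..b} \<Longrightarrow> invertible (B s)"
    and H2: "completely_controllable A B a b"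
    and H3A: "\<And>s. s \<in> {a..b} \<Longrightarrow> (A has_vector_derivative dA s) (at s within {a..b})"
      "continuous_on {a..b} dA"
    and H3B: "\<And>s. s \<in> {a..b} \<Longrightarrow> (B has_vector_derivative dB s) (at s within {a..b})"
      "continuous_on {a..b} dB"
    and adm: "admissible_pair A B a b u x" "\<And>i. i \<le> m \<Longrightarrow> x (t i) = xs i"
    and opt: "\<And>v y. admissible_pair A B a b v y \<Longrightarrow> (\<forall>i\<le>m. y (t i) = xs i) \<Longrightarrow>
                cost B a b u \<le> cost B a b v"
  shows "\<forall>i<m.
     (\<exists>w. (\<forall>s\<in>{t i..t (Suc i)}.
             (w has_vector_derivative (- (transpose (A s) *v w s))) (at s within {t i..t (Suc i)})) \<and>
          (AE s in lebesgue. s \<in> {t i..t (Suc i)} \<longrightarrow> B s *v u s = w s)) \<and>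
     (\<exists>x1 x2. \<forall>s\<in>{t i..t (Suc i)}.
          (x has_vector_derivative x1 s) (at s within {t i..t (Suc i)}) \<and>
          (x1 has_vector_derivative x2 s) (at s within {t i..t (Suc i)}) \<and>
          x2 s + (transpose (A s) - A s) *v x1 s - (transpose (A s) ** A s + dA s) *v x s = 0)"
proof -
  have t_mono: "t j \<le> t k" if "j \<le> k" "k \<le> m" for j k
  proof (rule lift_Suc_mono_le_ivl[where N="{..<m}"])
    show "t n \<le> t (Suc n)" if "n \<in> {..<m}" for n
      using part(3) that by (simp add: less_imp_le)
  qed (use that in auto)
  have optimal: "cost B a b u \<le> cost B a b v"
    if "admissible_pair A B a b v y" "\<forall>s\<in>t ` {..m}. y s = x s" for v y
    using opt that adm(2) by auto
  show ?thesis
  proof (intro allI impI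
      optimal_control_necessary_conditions_on_interval[OF _ _ _ H1 H3A(1) adm(1) optimal])
    fix i assume "i < m"
    then show "a \<le> t i" "t i < t (Suc i)" "t (Suc i) \<le> b"
      using part t_mono[of 0 i] t_mono[of "Suc i" m] by auto
    have "t j \<notin> {t i<..<t (Suc i)}" if "j \<le> m" for j
      using t_mono[of j i] t_mono[of "Suc i" j] that \<open>i < m\<close> by (cases "j \<le> i") auto
    then show "t ` {..m} \<inter> {t i<..<t (Suc i)} = {}"
      by blast
  qed
qed

end
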